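(* Let $\vec f$ be a classical solution of (AP), (LP) or (JP) with smooth initial curve satisfying $A(0)>0$, whose maximal existence time $T$ is finite. Assume \[ \limsup_{t\to T^-}\max_{s\in\mathbb R/L(t)\mathbb Z}\kappa(s,t)=\infty . \] Then for all $t\in[0,T)$, \[ \max_{s\in\mathbb R/L(t)\mathbb Z}\kappa(s,t)\ge\frac{1}{\sqrt{2(T-t)}} . \]
   Context: Fix an integer $n\ge1$. For a closed plane curve $\vec f:\mathbb{R}/L\mathbb{Z}\to\mathbb{R}^2$ parametrized by arc length $s$ ($L>0$ its length): $\vec\nu$ is $\partial_s\vec f$ rotated counterclockwise by $\pi/2$, $\kappa=\partial_s^2\vec f\cdot\vec\nu$, rotation number $n=\frac1{2\pi}\int_0^L\kappa\,ds$, $A=-\frac12\int_0^L\vec f\cdot\vec\nu\,ds$, $\tilde\kappa=\kappa-\frac1L\int_0^L\kappa\,ds$. A classical solution on $[0,T)$ is a smooth family $\vec f(\cdot,t)$ of closed curves with rotation number $n$, each parametrized by arc length on $\mathbb{R}/L(t)\mathbb{Z}$, satisfying $\partial_t\vec f=(\tilde\kappa-g/L)\vec\nu$, where $g$ is one of: (AP) $g\equiv0$; (LP) $g=L\left(\int_0^L\kappa\,ds\right)^{-1}\int_0^L\tilde\kappa^2\,ds$; (JP) $g=\frac{L^2}{2A}-\int_0^L\kappa\,ds$; $T$ is the maximal existence time. *)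

theory Defs
  imports "HOL-Analysis.Analysis"
begin

text \<open>Plane curves are complex-valued (the plane R^2 is identified with C, so that
  rotation counterclockwise by pi/2 is multiplication by i and the Euclidean inner
  product is the real inner product on complex).  A time-dependent closed curve is a
  function f u t, 1-periodic in the parameter u; arc-length quantities are obtained
  via ds = |f_u| du.\<close>

datatype flow_variant = AP | LP | JP

definition smooth_family :: "real \<Rightarrow> (real \<Rightarrow> real \<Rightarrow> complex) \<Rightarrow> bool" where
  "smooth_family T f \<longleftrightarrow>
     (\<exists>P :: nat \<Rightarrow> nat \<Rightarrow> real \<Rightarrow> real \<Rightarrow> complex.
        P 0 0 = f \<and>
        (\<forall>i j. continuous_on (UNIV \<times> {0..<T}) (\<lambda>(u,t). P i j u t)) \<and>
        (\<forall>i j u t. t \<in> {0..<T} \<longrightarrow>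
            ((\<lambda>x. P i j x t) has_vector_derivative P (Suc i) j u t) (at u)) \<and>
        (\<forall>i j u t. t \<in> {0..<T} \<longrightarrow>
            ((\<lambda>s. P i j u s) has_vector_derivative P i (Suc j) u t) (at t within {0..<T})))"

definition fu :: "(real \<Rightarrow> real \<Rightarrow> complex) \<Rightarrow> real \<Rightarrow> real \<Rightarrow> complex" where
  "fu f u t = vector_derivative (\<lambda>x. f x t) (at u)"

definition fuu :: "(real \<Rightarrow> real \<Rightarrow> complex) \<Rightarrow> real \<Rightarrow> real \<Rightarrow> complex" where
  "fuu f u t = vector_derivative (\<lambda>x. fu f x t) (at u)"

definition normal :: "(real \<Rightarrow> real \<Rightarrow> complex) \<Rightarrow> real \<Rightarrow> real \<Rightarrow> complex" where
  "normal f u t = \<i> * (fu f u t / complex_of_real (norm (fu f u t)))"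

text \<open>kappa = d_s^2 f . nu, with d_s = |f_u|^{-1} d_u (tangential part drops out).\<close>
definition curvature :: "(real \<Rightarrow> real \<Rightarrow> complex) \<Rightarrow> real \<Rightarrow> real \<Rightarrow> real" where
  "curvature f u t = (fuu f u t \<bullet> normal f u t) / (norm (fu f u t))\<^sup>2"

definition curve_length :: "(real \<Rightarrow> real \<Rightarrow> complex) \<Rightarrow> real \<Rightarrow> real" where
  "curve_length f t = integral {0..1} (\<lambda>u. norm (fu f u t))"

definition total_curvature :: "(real \<Rightarrow> real \<Rightarrow> complex) \<Rightarrow> real \<Rightarrow> real" where
  "total_curvature f t = integral {0..1} (\<lambda>u. curvature f u t * norm (fu f u t))"

definition area :: "(real \<Rightarrow> real \<Rightarrow> complex) \<Rightarrow> real \<Rightarrow> real" where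
  "area f t = - (1/2) * integral {0..1} (\<lambda>u. (f u t \<bullet> normal f u t) * norm (fu f u t))"

definition curv_tilde :: "(real \<Rightarrow> real \<Rightarrow> complex) \<Rightarrow> real \<Rightarrow> real \<Rightarrow> real" where
  "curv_tilde f u t = curvature f u t - total_curvature f t / curve_length f t"

definition g_term :: "flow_variant \<Rightarrow> (real \<Rightarrow> real \<Rightarrow> complex) \<Rightarrow> real \<Rightarrow> real" where
  "g_term v f t = (case v of
      AP \<Rightarrow> 0
    | LP \<Rightarrow> curve_length f t / total_curvature f t *
             integral {0..1} (\<lambda>u. (curv_tilde f u t)\<^sup>2 * norm (fu f u t))
    | JP \<Rightarrow> (curve_length f t)\<^sup>2 / (2 * area f t) - total_curvature f t)"

definition classical_solution ::
    "flow_variant \<Rightarrow> nat \<Rightarrow> (real \<Rightarrow> real \<Rightarrow> complex) \<Rightarrow> real \<Rightarrow> bool" where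
  "classical_solution v n f T \<longleftrightarrow>
     0 < T \<and> smooth_family T f \<and>
     (\<forall>u t. t \<in> {0..<T} \<longrightarrow> f (u + 1) t = f u t) \<and>
     (\<forall>u t. t \<in> {0..<T} \<longrightarrow> fu f u t \<noteq> 0) \<and>
     (\<forall>t \<in> {0..<T}. total_curvature f t = 2 * pi * real n) \<and>
     (\<forall>u t. t \<in> {0..<T} \<longrightarrow>
        ((\<lambda>s. f u s) has_vector_derivative
           complex_of_real (curv_tilde f u t - g_term v f t / curve_length f t) * normal f u t)
        (at t within {0..<T}))"

definition maximal_solution ::
    "flow_variant \<Rightarrow> nat \<Rightarrow> (real \<Rightarrow> real \<Rightarrow> complex) \<Rightarrow> real \<Rightarrow> bool" where
  "maximal_solution v n f T \<longleftrightarrow>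
     classical_solution v n f T \<and>
     \<not> (\<exists>T' h. T < T' \<and> classical_solution v n h T' \<and>
              (\<forall>u t. t \<in> {0..<T} \<longrightarrow> h u t = f u t))"

definition max_curvature :: "(real \<Rightarrow> real \<Rightarrow> complex) \<Rightarrow> real \<Rightarrow> real" where
  "max_curvature f t = (SUP u\<in>{0..1}. curvature f u t)"

end

theory Submission
  imports Defs
begin

text \<open>The curve moves with normal speed \<open>\<kappa> - \<lambda>(t)\<close>, where the nonlocal term \<open>\<lambda>\<close> is positive:
  for (AP) and (LP) because the total curvature is \<open>2\<pi>n > 0\<close>, for (JP) because \<open>\<lambda> = L/(2A)\<close> and
  the area cannot reach zero while \<open>\<lambda>\<close> stays continuous.  At a spatial maximum of the curvature
  the evolution equation \<open>\<kappa>\<^sub>t = \<partial>\<^sub>s\<^sup>2(\<kappa> - \<lambda>) + \<kappa>\<^sup>2(\<kappa> - \<lambda>)\<close> therefore gives \<open>\<kappa>\<^sub>t < \<kappa>\<^sup>3\<close>, so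
  \<open>max \<kappa>\<close> can never touch a solution \<open>1/\<surd>(\<beta> - 2(t - t\<^sub>0))\<close> of \<open>y' = y\<^sup>3\<close> from below.  If
  \<open>max \<kappa>(t\<^sub>0) < 1/\<surd>(2(T - t\<^sub>0))\<close>, such a barrier with \<open>\<beta> > 2(T - t\<^sub>0)\<close> bounds the curvature
  up to time \<open>T\<close>, contradicting its blow-up.\<close>

section \<open>Real-variable lemmas\<close>

lemma second_derivative_nonpos_at_max:
  fixes V V' :: "real \<Rightarrow> real"
  assumes dV: "\<And>x. (V has_real_derivative V' x) (at x)"
    and dV': "(V' has_real_derivative D) (at u)"
    and max: "\<And>x. V x \<le> V u"
  shows "D \<le> 0"
proof (rule ccontr)
  assume "\<not> D \<le> 0"
  then obtain d where "d > 0" and increasing: "\<And>h. h > 0 \<Longrightarrow> h < d \<Longrightarrow> V' u < V' (u + h)"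
    using DERIV_pos_inc_right[OF dV'] by force
  have "V' u = 0" using DERIV_local_max[OF dV[of u], of 1] max by auto
  obtain z where z: "u < z" "z < u + d/2" "V (u + d/2) - V u = d/2 * V' z"
    using MVT2[of u "u + d/2" V V'] dV \<open>d > 0\<close> by auto
  have "V' z > 0" using increasing[of "z - u"] z \<open>V' u = 0\<close> by auto
  then have "d/2 * V' z > 0" using \<open>d > 0\<close> by simp
  then show False using z max[of "u + d/2"] by linarith
qed

lemma periodic_vector_derivative:
  fixes g g' :: "real \<Rightarrow> 'a::real_normed_vector"
  assumes periodic: "\<And>x. g (x + 1) = g x"
    and deriv: "\<And>x. (g has_vector_derivative g' x) (at x)"
  shows "g' (x + 1) = g' x"
proof -
  have "((\<lambda>y. y + 1) has_vector_derivative 1) (at x)"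
    by (auto intro!: derivative_eq_intros)
  from vector_diff_chain_at[OF this deriv[of "x + 1"]]
  have "((\<lambda>y. g (y + 1)) has_vector_derivative g' (x + 1)) (at x)"
    by (simp add: o_def)
  then show ?thesis
    using periodic deriv[of x] vector_derivative_unique_at by force
qed

lemma at_within_Ico_neq_bot:
  fixes t T :: real
  assumes "0 \<le> t" "t < T"
  shows "at t within {0..<T} \<noteq> bot"
proof -
  have "at t within {t..(t+T)/2} \<le> at t within {0..<T}"
    by (rule at_le) (use assms in auto)
  moreover have "at t within {t..(t+T)/2} = at_right t"
    by (rule at_within_Icc_at_right) (use assms in auto)
  ultimately show ?thesis
    using trivial_limit_at_right_real[of t] by (auto simp: bot_unique)
qed

lemma continuous_on_Icc_nonpos_right_endpoint:
  fixes \<phi> :: "real \<Rightarrow> real"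
  assumes "continuous_on {a..b} \<phi>" "a < b" "\<And>t. t \<in> {a..<b} \<Longrightarrow> \<phi> t \<le> 0"
  shows "\<phi> b \<le> 0"
proof -
  have "eventually (\<lambda>x. \<phi> x \<le> 0) (at_left b)"
    using eventually_at_left_real[OF \<open>a < b\<close>] by eventually_elim (use assms in auto)
  then show ?thesis
    using tendsto_upperbound[OF continuous_on_Icc_at_leftD[OF assms(1,2)] _ trivial_limit_at_left_real]
    by blast
qed

lemma derivative_nonneg_at_first_zero:
  fixes \<phi> :: "real \<Rightarrow> real"
  assumes deriv: "(\<phi> has_real_derivative D) (at b within {a..b})"
    and "a < b" and neg: "\<And>t. t \<in> {a..<b} \<Longrightarrow> \<phi> t < 0" and "\<phi> b = 0"
  shows "D \<ge> 0"
proof (rule ccontr)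
  assume "\<not> D \<ge> 0"
  then obtain d where "d > 0"
    and decreasing: "\<And>h. h > 0 \<Longrightarrow> b - h \<in> {a..b} \<Longrightarrow> h < d \<Longrightarrow> \<phi> b < \<phi> (b - h)"
    using has_real_derivative_neg_dec_left[OF deriv] by force
  define h where "h = min (d/2) ((b - a)/2)"
  have "h \<le> d/2" "h \<le> (b - a)/2" "h > 0"
    using \<open>d > 0\<close> \<open>a < b\<close> unfolding h_def by (auto simp: min_def)
  then have "h < d" "b - h \<in> {a..<b}"
    by auto
  then show False
    using decreasing[of h] neg[of "b - h"] \<open>\<phi> b = 0\<close> by auto
qed

lemma continuous_on_slice:
  assumes "continuous_on (A \<times> B) (\<lambda>(x, y). g x y)" "x \<in> A"
  shows "continuous_on B (g x)"
proof -
  have "(\<lambda>y. (x, y)) ` B \<subseteq> A \<times> B" using assms(2) by auto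
  from continuous_on_compose2[OF assms(1) _ this] show ?thesis
    by (simp add: continuous_on_Pair continuous_on_const continuous_on_id)
qed

lemma continuous_on_integral_unit_interval:
  fixes g :: "real \<Rightarrow> 'a::topological_space \<Rightarrow> 'b::banach"
  assumes "continuous_on (UNIV \<times> S) (\<lambda>(u, t). g u t)"
  shows "continuous_on S (\<lambda>t. integral {0..1} (\<lambda>u. g u t))"
proof -
  have "continuous_on (S \<times> cbox 0 1) (\<lambda>(t, u). g u t)"
    by (rule continuous_on_subset[OF continuous_on_swap_args[OF assms]]) auto
  from integral_continuous_on_param[OF this] show ?thesis
    by simp
qed

lemma first_touching_time:
  fixes \<psi> :: "'a::metric_space \<Rightarrow> real \<Rightarrow> real"
  assumes "compact K" "a \<le> b"
    and cont: "continuous_on (K \<times> {a..b}) (\<lambda>(x, t). \<psi> x t)"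
    and initial: "\<And>x. x \<in> K \<Longrightarrow> \<psi> x a < 0"
    and touch: "x2 \<in> K" "\<psi> x2 b \<ge> 0"
  obtains t1 x1 where "a < t1" "t1 \<le> b" "x1 \<in> K" "\<psi> x1 t1 = 0"
    and "\<And>x. x \<in> K \<Longrightarrow> \<psi> x t1 \<le> 0"
    and "\<And>x t. x \<in> K \<Longrightarrow> t \<in> {a..<t1} \<Longrightarrow> \<psi> x t < 0"
proof -
  define Q where "Q = (K \<times> {a..b}) \<inter> (\<lambda>(x, t). \<psi> x t) -` {0..}"
  have "closed Q"
    unfolding Q_def
    by (rule continuous_closed_preimage[OF cont]) (auto intro: compact_imp_closed compact_Times assms(1))
  then have "compact ((K \<times> {a..b}) \<inter> Q)"
    by (intro compact_Int_closed compact_Times assms(1) compact_Icc)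
  then have compact: "compact (snd ` Q)"
    by (intro compact_continuous_image continuous_intros) (auto simp: Q_def)
  have nonempty: "snd ` Q \<noteq> {}"
  proof -
    have "(x2, b) \<in> Q" using touch \<open>a \<le> b\<close> by (simp add: Q_def)
    then show ?thesis by blast
  qed
  obtain t1 where "t1 \<in> snd ` Q" and first: "\<forall>s \<in> snd ` Q. t1 \<le> s"
    using compact_attains_inf[OF compact nonempty] by blast
  then obtain x1 where "(x1, t1) \<in> Q"
    by force
  then have "x1 \<in> K" "t1 \<in> {a..b}" "\<psi> x1 t1 \<ge> 0"
    by (simp_all add: Q_def)
  have before: "\<psi> x t < 0" if "x \<in> K" "t \<in> {a..<t1}" for x t
  proof (rule ccontr)
    assume "\<not> \<psi> x t < 0"
    then have "(x, t) \<in> Q"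
      using that \<open>t1 \<in> {a..b}\<close> by (simp add: Q_def)
    then have "t1 \<le> t"
      using first by force
    then show False using that by simp
  qed
  have "a < t1"
    using initial[OF \<open>x1 \<in> K\<close>] \<open>\<psi> x1 t1 \<ge> 0\<close> \<open>t1 \<in> {a..b}\<close> by (cases "t1 = a") auto
  have at_t1: "\<psi> x t1 \<le> 0" if "x \<in> K" for x
  proof (rule continuous_on_Icc_nonpos_right_endpoint[OF _ \<open>a < t1\<close>])
    show "continuous_on {a..t1} (\<psi> x)"
      using continuous_on_slice[OF cont that] \<open>t1 \<in> {a..b}\<close> by (auto intro: continuous_on_subset)
  next
    show "\<psi> x t \<le> 0" if "t \<in> {a..<t1}" for t
      using before[OF \<open>x \<in> K\<close> that] by simp
  qed
  show thesis
  proof (rule that[OF \<open>a < t1\<close> _ \<open>x1 \<in> K\<close> _ at_t1 before])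
    show "t1 \<le> b" using \<open>t1 \<in> {a..b}\<close> by simp
    show "\<psi> x1 t1 = 0" using at_t1[OF \<open>x1 \<in> K\<close>] \<open>\<psi> x1 t1 \<ge> 0\<close> by simp
  qed
qed

lemma has_real_derivative_blowup_barrier:
  fixes \<beta> t0 t :: real
  assumes "\<beta> - 2 * (t - t0) > 0"
  shows "((\<lambda>s. 1 / sqrt (\<beta> - 2 * (s - t0))) has_real_derivative (1 / sqrt (\<beta> - 2 * (t - t0))) ^ 3)
           (at t within S)"
  using assms
  by (auto intro!: derivative_eq_intros simp: field_simps power3_eq_cube)

section \<open>Curvature of plane curves\<close>

definition cross :: "complex \<Rightarrow> complex \<Rightarrow> real" where
  "cross a b = Re a * Im b - Im a * Re b"

definition plane_curvature :: "complex \<Rightarrow> complex \<Rightarrow> real" where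
  "plane_curvature w a = cross w a / norm w ^ 3"

definition plane_curvature_rate :: "complex \<Rightarrow> complex \<Rightarrow> complex \<Rightarrow> complex \<Rightarrow> real" where
  "plane_curvature_rate w a w' a' =
     (cross w' a + cross w a') / norm w ^ 3 - 3 * cross w a * (w \<bullet> w') / norm w ^ 5"

lemma plane_curvature_eq:
  "(a \<bullet> (\<i> * (w / complex_of_real (norm w)))) / (norm w)\<^sup>2 = plane_curvature w a"
  by (cases "w = 0")
     (simp_all add: plane_curvature_def inner_complex_def cross_def field_simps power2_eq_square power3_eq_cube)

lemma has_real_derivative_cross:
  fixes W A :: "real \<Rightarrow> complex"
  assumes "(W has_vector_derivative W') (at t within S)" "(A has_vector_derivative A') (at t within S)"
  shows "((\<lambda>s. cross (W s) (A s)) has_real_derivative cross W' (A t) + cross (W t) A') (at t within S)"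
  unfolding cross_def
  by (rule derivative_eq_intros has_field_derivative_Re has_field_derivative_Im assms refl | simp add: algebra_simps)+

lemma has_real_derivative_inner:
  fixes W A :: "real \<Rightarrow> 'a::real_inner"
  assumes "(W has_vector_derivative W') (at t within S)" "(A has_vector_derivative A') (at t within S)"
  shows "((\<lambda>s. W s \<bullet> A s) has_real_derivative W' \<bullet> A t + W t \<bullet> A') (at t within S)"
  using bounded_bilinear.has_vector_derivative[OF bounded_bilinear_inner assms]
  by (simp add: has_real_derivative_iff_has_vector_derivative add.commute)

lemma has_real_derivative_norm:
  fixes W :: "real \<Rightarrow> 'a::real_inner"
  assumes "(W has_vector_derivative W') (at t within S)" "W t \<noteq> 0"
  shows "((\<lambda>s. norm (W s)) has_real_derivative (W t \<bullet> W') / norm (W t)) (at t within S)"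
proof -
  have "((\<lambda>s. sqrt (W s \<bullet> W s)) has_real_derivative inverse (sqrt (W t \<bullet> W t)) / 2 * (W' \<bullet> W t + W t \<bullet> W'))
          (at t within S)"
    using assms by (intro DERIV_chain2[OF DERIV_real_sqrt] has_real_derivative_inner) auto
  then show ?thesis
    by (simp add: norm_eq_sqrt_inner inner_commute field_simps)
qed

lemma has_real_derivative_plane_curvature:
  fixes W A :: "real \<Rightarrow> complex"
  assumes "(W has_vector_derivative W') (at t within S)" "(A has_vector_derivative A') (at t within S)"
    and "W t \<noteq> 0"
  shows "((\<lambda>s. plane_curvature (W s) (A s)) has_real_derivative plane_curvature_rate (W t) (A t) W' A')
           (at t within S)"
proof -
  note cross' = has_real_derivative_cross[OF assms(1,2)]
  note norm' = has_real_derivative_norm[OF assms(1,3)]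
  have "((\<lambda>s. cross (W s) (A s) / norm (W s) ^ 3) has_real_derivative
          ((cross W' (A t) + cross (W t) A') * norm (W t) ^ 3
            - cross (W t) (A t) * (of_nat 3 * ((W t \<bullet> W') / norm (W t) * norm (W t) ^ (3 - Suc 0))))
          / (norm (W t) ^ 3 * norm (W t) ^ 3)) (at t within S)"
    by (rule DERIV_divide[OF cross' DERIV_power[OF norm']]) (use assms(3) in simp)
  moreover have "((cross W' (A t) + cross (W t) A') * norm (W t) ^ 3
            - cross (W t) (A t) * (of_nat 3 * ((W t \<bullet> W') / norm (W t) * norm (W t) ^ (3 - Suc 0))))
          / (norm (W t) ^ 3 * norm (W t) ^ 3) = plane_curvature_rate (W t) (A t) W' A'"
    using assms(3) by (simp add: plane_curvature_rate_def field_simps eval_nat_numeral)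
  ultimately show ?thesis
    by (simp add: plane_curvature_def)
qed

text \<open>With \<open>V = h r\<close> the first summand is \<open>V''/r\<^sup>2\<close>: at a critical point of the normal speed
  \<open>V\<close> this is the evolution equation \<open>\<kappa>\<^sub>t = \<partial>\<^sub>s\<^sup>2V + \<kappa>\<^sup>2V\<close>.\<close>

lemma plane_curvature_rate_normal_motion:
  fixes w a b :: complex and h h' h'' :: real
  defines "r \<equiv> norm w"
  defines "r' \<equiv> (w \<bullet> a) / r"
  defines "r'' \<equiv> (a \<bullet> a + w \<bullet> b - r'\<^sup>2) / r"
  assumes "w \<noteq> 0" and stationary: "h' * r + h * r' = 0"
  shows "plane_curvature_rate w a
           (of_real h' * (\<i> * w) + of_real h * (\<i> * a))
           (of_real h'' * (\<i> * w) + 2 * of_real h' * (\<i> * a) + of_real h * (\<i> * b))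
         = (h'' * r + 2 * h' * r' + h * r'') / r\<^sup>2 + (plane_curvature w a)\<^sup>2 * (h * r)"
proof -
  have "r > 0" using \<open>w \<noteq> 0\<close> by (simp add: r_def)
  have r2: "r\<^sup>2 = Re w ^ 2 + Im w ^ 2"
    by (simp add: r_def cmod_power2)
  have h': "h' * r\<^sup>2 = - h * (Re w * Re a + Im w * Im a)"
    using stationary \<open>r > 0\<close> by (simp add: r'_def inner_complex_def field_simps power2_eq_square)
  show ?thesis
    using \<open>r > 0\<close>
    unfolding plane_curvature_rate_def plane_curvature_def r''_def r'_def r_def[symmetric]
    by (simp add: cross_def inner_complex_def field_simps) (use h' r2 in algebra)
qed

lemma normal_motion_factorization:
  fixes W A B F G H :: "real \<Rightarrow> complex" and V :: "real \<Rightarrow> real" and u :: real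
  assumes W': "\<And>x. (W has_vector_derivative A x) (at x)"
    and A': "\<And>x. (A has_vector_derivative B x) (at x)"
    and F': "\<And>x. (F has_vector_derivative G x) (at x)"
    and G': "\<And>x. (G has_vector_derivative H x) (at x)"
    and regular: "\<And>x. W x \<noteq> 0"
    and normal_motion: "\<And>x. F x = of_real (V x) * (\<i> * (W x / of_real (norm (W x))))"
  obtains h h' h'' where "\<And>x. V x = h x * norm (W x)"
    and "\<And>x. (h has_real_derivative h' x) (at x)" and "(h' has_real_derivative h'') (at u)"
    and "\<And>x. G x = of_real (h' x) * (\<i> * W x) + of_real (h x) * (\<i> * A x)"
    and "H u = of_real h'' * (\<i> * W u) + 2 * of_real (h' u) * (\<i> * A u) + of_real (h u) * (\<i> * B u)"
proof -
  \<comment> \<open>\<open>F = h \<cdot> \<i>W\<close>, and this formula for \<open>h\<close> shows that it is as smooth as \<open>F\<close> and \<open>W\<close>\<close>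
  define h where "h x = cross (W x) (F x) / (W x \<bullet> W x)" for x
  define h' where "h' x = ((cross (A x) (F x) + cross (W x) (G x)) * (W x \<bullet> W x)
                    - cross (W x) (F x) * (A x \<bullet> W x + W x \<bullet> A x)) / ((W x \<bullet> W x) * (W x \<bullet> W x))" for x
  have h_eq: "h x = V x / norm (W x)" for x
  proof -
    have "cross (W x) (F x) = V x / norm (W x) * (Re (W x) ^ 2 + Im (W x) ^ 2)"
      using regular[of x] by (simp add: normal_motion cross_def field_simps power2_eq_square)
    also have "\<dots> = V x / norm (W x) * (W x \<bullet> W x)"
      by (simp add: inner_complex_def power2_eq_square)
    finally show ?thesis
      using regular[of x] by (simp add: h_def)
  qed
  have factor: "F = (\<lambda>x. of_real (h x) * (\<i> * W x))"
    using regular by (auto simp: normal_motion h_eq)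
  have dh: "(h has_real_derivative h' x) (at x)" for x
    unfolding h_def[abs_def] h'_def
    by (intro DERIV_divide has_real_derivative_cross has_real_derivative_inner W' F') (use regular in simp)
  have "\<exists>h''. (h' has_real_derivative h'') (at u)"
    unfolding h'_def
    by (rule exI, (rule DERIV_divide DERIV_diff DERIV_add DERIV_mult has_real_derivative_cross
        has_real_derivative_inner W' A' F' G')+) (use regular in simp)
  then obtain h'' where dh': "(h' has_real_derivative h'') (at u)" ..
  have "((\<lambda>x. of_real (h x) * (\<i> * W x)) has_vector_derivative
          of_real (h x) * (\<i> * A x) + of_real (h' x) * (\<i> * W x)) (at x)" for x
    by (intro has_vector_derivative_mult has_vector_derivative_of_real has_vector_derivative_mult_right dh W')
  then have G_eq: "G = (\<lambda>x. of_real (h' x) * (\<i> * W x) + of_real (h x) * (\<i> * A x))"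
    using vector_derivative_unique_at[OF F'[unfolded factor]] by (auto simp: add.commute)
  have "((\<lambda>x. of_real (h' x) * (\<i> * W x) + of_real (h x) * (\<i> * A x)) has_vector_derivative
          (of_real (h' u) * (\<i> * A u) + of_real h'' * (\<i> * W u))
          + (of_real (h u) * (\<i> * B u) + of_real (h' u) * (\<i> * A u))) (at u)"
    by (intro has_vector_derivative_add has_vector_derivative_mult has_vector_derivative_of_real
        has_vector_derivative_mult_right dh dh' W' A')
  then have "H u = of_real h'' * (\<i> * W u) + 2 * of_real (h' u) * (\<i> * A u) + of_real (h u) * (\<i> * B u)"
    using vector_derivative_unique_at[OF G'[of u, unfolded G_eq]] by (simp add: algebra_simps)
  with that[of h h' h''] show thesis
    using regular dh dh' G_eq by (simp add: h_eq)
qed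

lemma plane_curvature_rate_at_max:
  fixes W A B F G H :: "real \<Rightarrow> complex" and c u :: real
  assumes W': "\<And>x. (W has_vector_derivative A x) (at x)"
    and A': "\<And>x. (A has_vector_derivative B x) (at x)"
    and F': "\<And>x. (F has_vector_derivative G x) (at x)"
    and G': "\<And>x. (G has_vector_derivative H x) (at x)"
    and regular: "\<And>x. W x \<noteq> 0"
    and normal_motion:
      "\<And>x. F x = of_real (plane_curvature (W x) (A x) - c) * (\<i> * (W x / of_real (norm (W x))))"
    and max: "\<And>x. plane_curvature (W x) (A x) \<le> plane_curvature (W u) (A u)"
  shows "plane_curvature_rate (W u) (A u) (G u) (H u)
           \<le> (plane_curvature (W u) (A u))\<^sup>2 * (plane_curvature (W u) (A u) - c)"
proof -
  define \<kappa> where "\<kappa> x = plane_curvature (W x) (A x)" for x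
  define r where "r x = norm (W x)" for x
  define r' where "r' x = (W x \<bullet> A x) / r x" for x
  define r'' where "r'' = (A u \<bullet> A u + W u \<bullet> B u - (r' u)\<^sup>2) / r u"
  obtain h h' h'' where speed: "\<And>x. \<kappa> x - c = h x * r x"
    and dh: "\<And>x. (h has_real_derivative h' x) (at x)" and dh': "(h' has_real_derivative h'') (at u)"
    and G_eq: "G u = of_real (h' u) * (\<i> * W u) + of_real (h u) * (\<i> * A u)"
    and H_eq: "H u = of_real h'' * (\<i> * W u) + 2 * of_real (h' u) * (\<i> * A u) + of_real (h u) * (\<i> * B u)"
    using normal_motion_factorization[OF W' A' F' G' regular normal_motion] unfolding \<kappa>_def r_def by metis
  have r_pos: "r x > 0" for x
    using regular[of x] by (simp add: r_def)
  have dr: "(r has_real_derivative r' x) (at x)" for x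
    unfolding r_def[abs_def] r'_def using has_real_derivative_norm[OF W' regular] by simp
  have dr': "(r' has_real_derivative r'') (at u)"
  proof -
    have "(r' has_real_derivative ((A u \<bullet> A u + W u \<bullet> B u) * r u - (W u \<bullet> A u) * r' u) / (r u * r u)) (at u)"
      unfolding r'_def[abs_def]
      by (intro DERIV_divide has_real_derivative_inner W' A' dr[unfolded r'_def]) (use r_pos[of u] in simp)
    then show ?thesis
      using r_pos[of u] by (simp add: r''_def r'_def field_simps power2_eq_square)
  qed
  have dV: "((\<lambda>x. h x * r x) has_real_derivative h' x * r x + h x * r' x) (at x)" for x
    by (rule derivative_eq_intros dh dr refl | simp)+
  have dV': "((\<lambda>x. h' x * r x + h x * r' x) has_real_derivative h'' * r u + 2 * h' u * r' u + h u * r'') (at u)"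
    by (rule derivative_eq_intros dh dh' dr dr' refl | simp add: algebra_simps)+
  have V_max: "h x * r x \<le> h u * r u" for x
    using max[of x] speed[of x] speed[of u] by (simp add: \<kappa>_def)
  have stationary: "h' u * r u + h u * r' u = 0"
    using DERIV_local_max[OF dV[of u], of 1] V_max by auto
  have concave: "h'' * r u + 2 * h' u * r' u + h u * r'' \<le> 0"
    by (rule second_derivative_nonpos_at_max[OF dV dV' V_max])
  have "plane_curvature_rate (W u) (A u) (G u) (H u)
          = (h'' * r u + 2 * h' u * r' u + h u * r'') / (r u)\<^sup>2 + (\<kappa> u)\<^sup>2 * (h u * r u)"
    unfolding G_eq H_eq \<kappa>_def r''_def r'_def r_def
    by (rule plane_curvature_rate_normal_motion[OF regular]) (use stationary in \<open>simp add: r_def r'_def\<close>)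
  also have "\<dots> \<le> (\<kappa> u)\<^sup>2 * (\<kappa> u - c)"
    using concave r_pos[of u] speed[of u] by (simp add: divide_nonpos_pos)
  finally show ?thesis
    by (simp add: \<kappa>_def)
qed

section \<open>Solutions of the flow\<close>

locale curvature_flow_solution =
  fixes v :: flow_variant and n :: nat and f :: "real \<Rightarrow> real \<Rightarrow> complex" and T :: real
    and P :: "nat \<Rightarrow> nat \<Rightarrow> real \<Rightarrow> real \<Rightarrow> complex"
  assumes n_ge_1: "n \<ge> 1" and solution: "classical_solution v n f T" and initial_area: "area f 0 > 0"
    and P_0_0: "P 0 0 = f"
    and P_cont: "\<And>i j. continuous_on (UNIV \<times> {0..<T}) (\<lambda>(u, t). P i j u t)"
    and P_u: "\<And>i j u t. t \<in> {0..<T} \<Longrightarrow>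
                ((\<lambda>x. P i j x t) has_vector_derivative P (Suc i) j u t) (at u)"
    and P_t: "\<And>i j u t. t \<in> {0..<T} \<Longrightarrow>
                ((\<lambda>s. P i j u s) has_vector_derivative P i (Suc j) u t) (at t within {0..<T})"
begin

lemma fu_eq: "t \<in> {0..<T} \<Longrightarrow> fu f u t = P 1 0 u t"
  unfolding fu_def using P_u[of t 0 0 u] P_0_0 by (simp add: vector_derivative_at)

lemma fuu_eq:
  assumes "t \<in> {0..<T}"
  shows "fuu f u t = P 2 0 u t"
proof -
  have "(\<lambda>x. fu f x t) = (\<lambda>x. P 1 0 x t)" using fu_eq[OF assms] by auto
  then show ?thesis
    unfolding fuu_def using P_u[OF assms, of 1 0 u] by (simp add: vector_derivative_at numeral_2_eq_2)
qed

lemma regular: "t \<in> {0..<T} \<Longrightarrow> P 1 0 u t \<noteq> 0"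
  using solution fu_eq by (auto simp: classical_solution_def)

lemma normal_eq: "t \<in> {0..<T} \<Longrightarrow> normal f u t = \<i> * (P 1 0 u t / of_real (norm (P 1 0 u t)))"
  by (simp add: normal_def fu_eq)

lemma curvature_eq: "t \<in> {0..<T} \<Longrightarrow> curvature f u t = plane_curvature (P 1 0 u t) (P 2 0 u t)"
  unfolding curvature_def normal_def fu_eq fuu_eq by (rule plane_curvature_eq)

definition nonlocal_term :: "real \<Rightarrow> real" where
  "nonlocal_term t = (total_curvature f t + g_term v f t) / curve_length f t"

lemma normal_velocity:
  assumes "t \<in> {0..<T}"
  shows "P 0 1 u t = of_real (curvature f u t - nonlocal_term t) * normal f u t"
proof -
  have "((\<lambda>s. f u s) has_vector_derivative
          of_real (curv_tilde f u t - g_term v f t / curve_length f t) * normal f u t) (at t within {0..<T})"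
    using solution assms by (auto simp: classical_solution_def)
  moreover have "((\<lambda>s. f u s) has_vector_derivative P 0 1 u t) (at t within {0..<T})"
    using P_t[OF assms, of 0 0 u] P_0_0 by simp
  ultimately have "P 0 1 u t = of_real (curv_tilde f u t - g_term v f t / curve_length f t) * normal f u t"
    using vector_derivative_unique_within[OF at_within_Ico_neq_bot] assms by auto
  then show ?thesis
    by (simp add: curv_tilde_def nonlocal_term_def add_divide_distrib)
qed

lemma curvature_periodic:
  assumes "t \<in> {0..<T}"
  shows "curvature f (x + 1) t = curvature f x t"
proof -
  have P0: "P 0 0 (x + 1) t = P 0 0 x t" for x
    using solution assms P_0_0 by (auto simp: classical_solution_def)
  have P1: "P 1 0 (x + 1) t = P 1 0 x t" for x
    by (rule periodic_vector_derivative[of "\<lambda>x. P 0 0 x t", OF P0]) (use P_u[OF assms, of 0 0] in simp)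
  have "P 2 0 (x + 1) t = P 2 0 x t"
    by (rule periodic_vector_derivative[of "\<lambda>x. P 1 0 x t", OF P1]) (use P_u[OF assms, of 1 0] in \<open>simp add: numeral_2_eq_2\<close>)
  then show ?thesis
    using assms P1[of x] by (simp add: curvature_eq)
qed

lemma curvature_le_if_le_on_unit_interval:
  assumes "t \<in> {0..<T}" and le: "\<And>u. u \<in> {0..1} \<Longrightarrow> curvature f u t \<le> M"
  shows "curvature f x t \<le> M"
proof -
  interpret periodic_fun_simple' "\<lambda>x. curvature f x t"
    by standard (rule curvature_periodic[OF assms(1)])
  have "x - of_int \<lfloor>x\<rfloor> \<in> {0..1}"
    by simp linarith
  then show ?thesis
    using le[of "x - of_int \<lfloor>x\<rfloor>"] minus_of_int[of x "\<lfloor>x\<rfloor>"] by simp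
qed

lemma curvature_has_time_derivative:
  assumes "t \<in> {0..<T}"
  shows "((\<lambda>s. curvature f u s) has_real_derivative
           plane_curvature_rate (P 1 0 u t) (P 2 0 u t) (P 1 1 u t) (P 2 1 u t)) (at t within {0..<T})"
proof (rule has_field_derivative_transform_within[OF _ zero_less_one assms])
  show "((\<lambda>s. plane_curvature (P 1 0 u s) (P 2 0 u s)) has_real_derivative
          plane_curvature_rate (P 1 0 u t) (P 2 0 u t) (P 1 1 u t) (P 2 1 u t)) (at t within {0..<T})"
    using assms P_t[OF assms] regular[OF assms] by (intro has_real_derivative_plane_curvature) auto
qed (simp add: curvature_eq)

lemma curvature_rate_at_max:
  assumes t: "t \<in> {0..<T}" and max: "\<And>x. curvature f x t \<le> curvature f u t"
  shows "plane_curvature_rate (P 1 0 u t) (P 2 0 u t) (P 1 1 u t) (P 2 1 u t)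
           \<le> (curvature f u t)\<^sup>2 * (curvature f u t - nonlocal_term t)"
  unfolding curvature_eq[OF t]
proof (rule plane_curvature_rate_at_max[where W="\<lambda>x. P 1 0 x t" and B="\<lambda>x. P 3 0 x t" and F="\<lambda>x. P 0 1 x t"])
  show "((\<lambda>x. P 1 0 x t) has_vector_derivative P 2 0 x t) (at x)"
    and "((\<lambda>x. P 2 0 x t) has_vector_derivative P 3 0 x t) (at x)"
    and "((\<lambda>x. P 0 1 x t) has_vector_derivative P 1 1 x t) (at x)"
    and "((\<lambda>x. P 1 1 x t) has_vector_derivative P 2 1 x t) (at x)" for x
    using P_u[OF t] by (simp_all add: numeral_2_eq_2 numeral_3_eq_3)
  show "P 1 0 x t \<noteq> 0" for x
    using regular[OF t] .
  show "P 0 1 x t = of_real (plane_curvature (P 1 0 x t) (P 2 0 x t) - nonlocal_term t)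
          * (\<i> * (P 1 0 x t / of_real (norm (P 1 0 x t))))" for x
    using normal_velocity[OF t, of x] by (simp add: curvature_eq[OF t] normal_eq[OF t])
  show "plane_curvature (P 1 0 x t) (P 2 0 x t) \<le> plane_curvature (P 1 0 u t) (P 2 0 u t)" for x
    using max[of x] by (simp add: curvature_eq[OF t])
qed

lemma curvature_continuous: "continuous_on (UNIV \<times> {0..<T}) (\<lambda>(u, t). curvature f u t)"
proof -
  have "continuous_on (UNIV \<times> {0..<T}) (\<lambda>p. plane_curvature (P 1 0 (fst p) (snd p)) (P 2 0 (fst p) (snd p)))"
    unfolding plane_curvature_def cross_def
    using P_cont[of 1 0] P_cont[of 2 0] regular
    by (auto intro!: continuous_intros simp: case_prod_beta simp del: One_nat_def)
  then show ?thesis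
    by (rule continuous_on_cong[THEN iffD1, rotated -1]) (auto simp: curvature_eq)
qed

lemma curve_length_eq: "t \<in> {0..<T} \<Longrightarrow> curve_length f t = integral {0..1} (\<lambda>u. norm (P 1 0 u t))"
  by (simp add: curve_length_def fu_eq)

lemma curve_length_pos:
  assumes t: "t \<in> {0..<T}"
  shows "curve_length f t > 0"
proof -
  have cont: "continuous_on {0..1} (\<lambda>u. norm (P 1 0 u t))"
    using continuous_on_slice[OF continuous_on_swap_args[OF P_cont[of 1 0]] t]
    by (intro continuous_intros) (auto intro: continuous_on_subset)
  then obtain u0 where u0: "\<And>u. u \<in> {0..1} \<Longrightarrow> norm (P 1 0 u0 t) \<le> norm (P 1 0 u t)"
    using continuous_attains_inf[OF compact_Icc _ cont] by fastforce
  have "norm (P 1 0 u0 t) \<le> integral {0..1} (\<lambda>u. norm (P 1 0 u t))"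
    using integral_le[OF integrable_const_ivl integrable_continuous_interval[OF cont]] u0 by fastforce
  moreover have "norm (P 1 0 u0 t) > 0"
    using regular[OF t] by simp
  ultimately show ?thesis
    using curve_length_eq[OF t] by linarith
qed

lemma normal_continuous: "continuous_on (UNIV \<times> {0..<T}) (\<lambda>(u, t). normal f u t)"
proof -
  have "continuous_on (UNIV \<times> {0..<T}) (\<lambda>p. \<i> * (P 1 0 (fst p) (snd p) / of_real (norm (P 1 0 (fst p) (snd p)))))"
    using P_cont[of 1 0] regular
    by (auto intro!: continuous_intros simp: case_prod_beta simp del: One_nat_def)
  then show ?thesis
    by (rule continuous_on_cong[THEN iffD1, rotated -1]) (auto simp: normal_eq)
qed

lemma curve_length_continuous: "continuous_on {0..<T} (curve_length f)"
proof -
  have "continuous_on {0..<T} (\<lambda>t. integral {0..1} (\<lambda>u. norm (P 1 0 u t)))"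
    using P_cont[of 1 0]
    by (intro continuous_on_integral_unit_interval) (auto intro!: continuous_intros simp: case_prod_beta)
  then show ?thesis
    by (rule continuous_on_cong[THEN iffD1, rotated -1]) (auto simp: curve_length_eq)
qed

lemma area_continuous: "continuous_on {0..<T} (area f)"
proof -
  have "continuous_on {0..<T}
          (\<lambda>t. - (1/2) * integral {0..1} (\<lambda>u. (P 0 0 u t \<bullet> normal f u t) * norm (P 1 0 u t)))"
    using P_cont[of 0 0] P_cont[of 1 0] normal_continuous
    by (intro continuous_intros continuous_on_integral_unit_interval)
       (auto intro!: continuous_intros simp: case_prod_beta)
  then show ?thesis
    by (rule continuous_on_cong[THEN iffD1, rotated -1]) (auto simp: area_def P_0_0 fu_eq)
qed

text \<open>Reading the nonlocal term off the flow at \<open>u = 0\<close> yields its continuity in time.\<close>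

lemma nonlocal_term_eq:
  assumes t: "t \<in> {0..<T}"
  shows "nonlocal_term t = curvature f 0 t - P 0 1 0 t \<bullet> normal f 0 t"
proof -
  have "P 0 1 0 t \<bullet> normal f 0 t = (curvature f 0 t - nonlocal_term t) * (normal f 0 t \<bullet> normal f 0 t)"
    unfolding normal_velocity[OF t] scaleR_conv_of_real[symmetric] by (rule inner_scaleR_left)
  moreover have "normal f 0 t \<bullet> normal f 0 t = 1"
    using regular[OF t, of 0] by (simp add: normal_eq[OF t] norm_mult norm_divide dot_square_norm)
  ultimately show ?thesis
    by simp
qed

lemma nonlocal_term_continuous: "continuous_on {0..<T} nonlocal_term"
proof -
  have "continuous_on {0..<T} (\<lambda>t. curvature f 0 t - P 0 1 0 t \<bullet> normal f 0 t)"
    using continuous_on_slice[OF curvature_continuous] continuous_on_slice[OF P_cont]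
      continuous_on_slice[OF normal_continuous]
    by (intro continuous_intros) auto
  then show ?thesis
    by (rule continuous_on_cong[THEN iffD1, rotated -1]) (auto simp: nonlocal_term_eq)
qed

lemma nonlocal_term_JP:
  assumes "v = JP" "t \<in> {0..<T}" "area f t \<noteq> 0"
  shows "nonlocal_term t = curve_length f t / (2 * area f t)"
  unfolding nonlocal_term_def using assms curve_length_pos[OF assms(2)]
  by (simp add: g_term_def field_simps power2_eq_square)

text \<open>For (JP) the relation \<open>2A\<lambda> = L\<close> holds while \<open>A > 0\<close>; by continuity it would persist at a
  first zero of the area and force \<open>L = 0\<close>.\<close>

lemma area_pos_JP:
  assumes JP: "v = JP" and t: "t \<in> {0..<T}"
  shows "area f t > 0"
proof (rule ccontr)
  assume "\<not> area f t > 0"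
  have "continuous_on {0..t} (\<lambda>s. - area f s)"
    using t by (intro continuous_intros continuous_on_subset[OF area_continuous]) auto
  then have cont: "continuous_on ({0::real} \<times> {0..t}) (\<lambda>(_, s). - area f s)"
    unfolding case_prod_beta by (rule continuous_on_compose2) (auto intro: continuous_intros)
  obtain t1 x1 where "0 < t1" "t1 \<le> t" "x1 \<in> {0}" "- area f t1 = 0"
    and "\<And>x. x \<in> {0} \<Longrightarrow> - area f t1 \<le> 0"
    and before: "\<And>x s. x \<in> {0} \<Longrightarrow> s \<in> {0..<t1} \<Longrightarrow> - area f s < 0"
    by (rule first_touching_time[OF compact_sing _ cont]) (use t initial_area \<open>\<not> area f t > 0\<close> in auto)
  have positive_before: "area f s > 0" if "s \<in> {0..<t1}" for s
    using before[OF _ that] by simp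
  have sub: "{0..t1} \<subseteq> {0..<T}" using \<open>t1 \<le> t\<close> t by auto
  have "- (nonlocal_term t1 * (2 * area f t1) - curve_length f t1) \<le> 0"
  proof (rule continuous_on_Icc_nonpos_right_endpoint[OF _ \<open>0 < t1\<close>])
    show "continuous_on {0..t1} (\<lambda>s. - (nonlocal_term s * (2 * area f s) - curve_length f s))"
      by (intro continuous_intros continuous_on_subset[OF _ sub]
          nonlocal_term_continuous area_continuous curve_length_continuous)
    show "- (nonlocal_term s * (2 * area f s) - curve_length f s) \<le> 0" if "s \<in> {0..<t1}" for s
    proof -
      have "s \<in> {0..<T}" using that \<open>t1 \<le> t\<close> t by auto
      then show ?thesis
        using nonlocal_term_JP[OF JP, of s] positive_before[OF that] by simp
    qed
  qed
  then show False
    using \<open>- area f t1 = 0\<close> curve_length_pos[of t1] \<open>0 < t1\<close> \<open>t1 \<le> t\<close> t by auto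
qed

lemma nonlocal_term_pos:
  assumes t: "t \<in> {0..<T}"
  shows "nonlocal_term t > 0"
proof -
  have L: "curve_length f t > 0" by (rule curve_length_pos[OF t])
  have total: "total_curvature f t = 2 * pi * real n"
    using solution t by (simp add: classical_solution_def)
  have "2 * pi * real n > 0" using n_ge_1 by simp
  show ?thesis
  proof (cases "v = JP")
    case True
    then show ?thesis
      using nonlocal_term_JP[OF True t] area_pos_JP[OF True t] L by simp
  next
    case False
    have "0 \<le> integral {0..1} (\<lambda>u. (curv_tilde f u t)\<^sup>2 * norm (fu f u t))"
      by (cases "(\<lambda>u. (curv_tilde f u t)\<^sup>2 * norm (fu f u t)) integrable_on {0..1}")
         (auto intro!: integral_nonneg simp: not_integrable_integral)
    then have "g_term v f t \<ge> 0"
      using False L total \<open>2 * pi * real n > 0\<close> by (cases v) (simp_all add: g_term_def)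
    then show ?thesis
      using L total \<open>2 * pi * real n > 0\<close> unfolding nonlocal_term_def by simp
  qed
qed

lemma curvature_bdd_above: "t \<in> {0..<T} \<Longrightarrow> bdd_above ((\<lambda>u. curvature f u t) ` {0..1})"
  using continuous_on_slice[OF continuous_on_swap_args[OF curvature_continuous]]
  by (intro bounded_imp_bdd_above compact_imp_bounded compact_continuous_image)
     (auto intro: continuous_on_subset)

lemma curvature_le_max_curvature: "t \<in> {0..<T} \<Longrightarrow> u \<in> {0..1} \<Longrightarrow> curvature f u t \<le> max_curvature f t"
  unfolding max_curvature_def by (rule cSUP_upper[OF _ curvature_bdd_above])

lemma max_curvature_le: "(\<And>u. u \<in> {0..1} \<Longrightarrow> curvature f u t \<le> M) \<Longrightarrow> max_curvature f t \<le> M"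
  unfolding max_curvature_def by (rule cSUP_least) auto

lemma curvature_below_barrier:
  assumes t0: "t0 \<in> {0..<T}" and "\<beta> > 2 * (T - t0)"
    and initial: "\<And>u. u \<in> {0..1} \<Longrightarrow> curvature f u t0 < 1 / sqrt \<beta>"
    and t: "t \<in> {t0..<T}" and u: "u \<in> {0..1}"
  shows "curvature f u t < 1 / sqrt (\<beta> - 2 * (t - t0))"
proof (rule ccontr)
  define y where "y s = 1 / sqrt (\<beta> - 2 * (s - t0))" for s
  assume "\<not> ?thesis"
  then have touch: "curvature f u t - y t \<ge> 0" by (simp add: y_def)
  have y': "(y has_real_derivative (y s) ^ 3) (at s within S)" if "s \<le> T" for s S
    unfolding y_def[abs_def] by (rule has_real_derivative_blowup_barrier) (use that \<open>\<beta> > 2 * (T - t0)\<close> in simp)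
  have y_pos: "s \<le> T \<Longrightarrow> y s > 0" for s
    using \<open>\<beta> > 2 * (T - t0)\<close> by (simp add: y_def)
  have sub: "{t0..t} \<subseteq> {0..<T}" using t0 t by auto
  have cont: "continuous_on ({0..1} \<times> {t0..t}) (\<lambda>(u, s). curvature f u s - y s)"
  proof -
    have "continuous_on {t0..t} y"
      by (rule DERIV_continuous_on[OF y']) (use t in auto)
    then have "continuous_on ({0..1} \<times> {t0..t}) (\<lambda>p. y (snd p))"
      by (rule continuous_on_compose2) (auto intro: continuous_intros)
    then show ?thesis
      using continuous_on_subset[OF curvature_continuous, of "{0..1} \<times> {t0..t}"] sub
      by (auto intro!: continuous_intros simp: case_prod_beta)
  qed
  obtain t1 u1 where "t0 < t1" "t1 \<le> t" "u1 \<in> {0..1}" and touching: "curvature f u1 t1 - y t1 = 0"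
    and below: "\<And>u. u \<in> {0..1} \<Longrightarrow> curvature f u t1 - y t1 \<le> 0"
    and before: "\<And>u s. u \<in> {0..1} \<Longrightarrow> s \<in> {t0..<t1} \<Longrightarrow> curvature f u s - y s < 0"
    by (rule first_touching_time[OF compact_Icc _ cont]) (use t initial u touch in \<open>auto simp: y_def\<close>)
  have t1: "t1 \<in> {0..<T}" using \<open>t0 < t1\<close> \<open>t1 \<le> t\<close> t0 t by auto
  have max: "curvature f x t1 \<le> curvature f u1 t1" for x
    using curvature_le_if_le_on_unit_interval[OF t1] below touching by fastforce
  define rate where "rate = plane_curvature_rate (P 1 0 u1 t1) (P 2 0 u1 t1) (P 1 1 u1 t1) (P 2 1 u1 t1)"
  have "rate - y t1 ^ 3 \<ge> 0"
  proof (rule derivative_nonneg_at_first_zero[OF _ \<open>t0 < t1\<close>])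
    have "{t0..t1} \<subseteq> {0..<T}" using t0 t1 by auto
    then show "((\<lambda>s. curvature f u1 s - y s) has_real_derivative rate - y t1 ^ 3) (at t1 within {t0..t1})"
      unfolding rate_def
      by (intro DERIV_diff has_field_derivative_subset[OF curvature_has_time_derivative[OF t1]] y')
         (use t1 in auto)
  qed (use before \<open>u1 \<in> {0..1}\<close> touching in auto)
  moreover have "rate \<le> (curvature f u1 t1)\<^sup>2 * (curvature f u1 t1 - nonlocal_term t1)"
    unfolding rate_def by (rule curvature_rate_at_max[OF t1 max])
  moreover have "(curvature f u1 t1)\<^sup>2 * nonlocal_term t1 > 0"
    using nonlocal_term_pos[OF t1] touching y_pos[of t1] t1 by simp
  ultimately show False
    using touching by (simp add: power2_eq_square power3_eq_cube algebra_simps)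
qed

lemma max_curvature_lower_bound:
  assumes blowup: "Limsup (at_left T) (\<lambda>t. ereal (max_curvature f t)) = \<infinity>" and t0: "t0 \<in> {0..<T}"
  shows "max_curvature f t0 \<ge> 1 / sqrt (2 * (T - t0))"
proof (rule ccontr)
  define B where "B = 1 / sqrt (2 * (T - t0))"
  assume "\<not> ?thesis"
  then have "max (max_curvature f t0) 0 < B"
    using t0 by (auto simp: B_def)
  then obtain y0 where y0: "max (max_curvature f t0) 0 < y0" "y0 < B"
    using dense by blast
  define \<beta> where "\<beta> = 1 / y0\<^sup>2"
  have "1 / sqrt \<beta> = y0"
    using y0 by (simp add: \<beta>_def real_sqrt_divide)
  have "y0\<^sup>2 < B\<^sup>2"
    using y0 by (simp add: power_strict_mono)
  then have "\<beta> > 2 * (T - t0)"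
    using y0 t0 by (simp add: \<beta>_def B_def power_divide field_simps)
  define M where "M = 1 / sqrt (\<beta> - 2 * (T - t0))"
  have "max_curvature f t \<le> M" if t: "t \<in> {t0<..<T}" for t
  proof (rule max_curvature_le)
    fix u :: real assume "u \<in> {0..1}"
    have "curvature f u t < 1 / sqrt (\<beta> - 2 * (t - t0))"
    proof (rule curvature_below_barrier[OF t0 \<open>\<beta> > 2 * (T - t0)\<close>])
      show "curvature f u t0 < 1 / sqrt \<beta>" if "u \<in> {0..1}" for u
        using curvature_le_max_curvature[OF t0 that] y0 \<open>1 / sqrt \<beta> = y0\<close> by simp
    qed (use t \<open>u \<in> {0..1}\<close> in auto)
    also have "\<dots> \<le> M"
      unfolding M_def using \<open>\<beta> > 2 * (T - t0)\<close> t
      by (intro divide_left_mono real_sqrt_le_mono mult_pos_pos) auto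
    finally show "curvature f u t \<le> M" by simp
  qed
  then have "eventually (\<lambda>t. ereal (max_curvature f t) \<le> ereal M) (at_left T)"
    using eventually_at_left_real[of t0 T] t0 by (auto elim!: eventually_mono)
  then have "Limsup (at_left T) (\<lambda>t. ereal (max_curvature f t)) \<le> ereal M"
    by (rule Limsup_bounded)
  then show False
    using blowup by simp
qed

end

theorem mainTheorem16:
  fixes v :: flow_variant and n :: nat and f :: "real \<Rightarrow> real \<Rightarrow> complex" and T :: real
  assumes "n \<ge> 1"
    and "maximal_solution v n f T"
    and "area f 0 > 0"
    and "Limsup (at_left T) (\<lambda>t. ereal (max_curvature f t)) = \<infinity>"
  shows "\<forall>t \<in> {0..<T}. max_curvature f t \<ge> 1 / sqrt (2 * (T - t))"
proof -
  have solution: "classical_solution v n f T"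
    using assms(2) by (simp add: maximal_solution_def)
  then obtain P :: "nat \<Rightarrow> nat \<Rightarrow> real \<Rightarrow> real \<Rightarrow> complex" where
    "P 0 0 = f" "\<forall>i j. continuous_on (UNIV \<times> {0..<T}) (\<lambda>(u, t). P i j u t)"
    "\<forall>i j u t. t \<in> {0..<T} \<longrightarrow> ((\<lambda>x. P i j x t) has_vector_derivative P (Suc i) j u t) (at u)"
    "\<forall>i j u t. t \<in> {0..<T} \<longrightarrow>
       ((\<lambda>s. P i j u s) has_vector_derivative P i (Suc j) u t) (at t within {0..<T})"
    unfolding classical_solution_def smooth_family_def by blast
  then interpret curvature_flow_solution v n f T P
    using assms(1,3) solution by unfold_locales auto
  show ?thesis
    using max_curvature_lower_bound[OF assms(4)] by blast
qed

end
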